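(* Let $k\ge0$, $n\ge k+4$ and let $Z$ be a positive $n\times(k+4)$ matrix. Then there is an open neighborhood $B\subset\mathrm{Gr}_{k,n;1}$ of $\mathrm{Gr}^{\ge}_{k,n;1}$ such that the formula $(U,W)\mapsto(UZ,WZ)$ defines a smooth submersion $B\to\mathrm{Gr}_{k,k+4;1}$, extending the amplituhedron map on $\mathrm{Gr}^{\ge}_{k,n;1}$.
   Context: For $m\ge k+2$, $\mathrm{Gr}_{k,m;1}$ denotes the two-step flag variety of pairs $(U,W)$ of subspaces $U\subset W\subset\mathbb{R}^m$ with $\dim U=k$, $\dim W=k+2$. A representative of $(U,W)\in\mathrm{Gr}_{k,n;1}$ is a pair $(C;D)$ with $C$ a $k\times n$ matrix with row span $U$ and $D$ a $2\times n$ matrix such that rows of $C$ and $D$ together span $W$; $[D;C]$ is the $(k+2)\times n$ matrix with the rows of $D$ above those of $C$. $\mathrm{Gr}^{\ge}_{k,n;1}$ is the set of $(U,W)$ having a representative with all maximal minors of $C$ and of $[D;C]$ nonnegative. $Z$ positive means all maximal minors of the $n\times(k+4)$ matrix $Z$ are positive. Here $UZ=\{uZ: u\in U\}$ and similarly for $WZ$. *)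

theory Defs
  imports "HOL-Analysis.Analysis" "HOL-Combinatorics.Permutations"
begin

text \<open>Matrices are functions nat => nat => real; an r x c matrix is one whose
entries vanish outside the index range {..<r} x {..<c}.\<close>

type_synonym rmat = "nat \<Rightarrow> nat \<Rightarrow> real"

definition is_mat :: "nat \<Rightarrow> nat \<Rightarrow> rmat \<Rightarrow> bool" where
  "is_mat r c A \<longleftrightarrow> (\<forall>i j. (r \<le> i \<or> c \<le> j) \<longrightarrow> A i j = 0)"

definition det_sq :: "nat \<Rightarrow> rmat \<Rightarrow> real" where
  "det_sq m A = (\<Sum>p | p permutes {..<m}. of_int (sign p) * (\<Prod>i<m. A i (p i)))"

definition sel :: "nat \<Rightarrow> nat \<Rightarrow> (nat \<Rightarrow> nat) set" where
  "sel m c = {s. (\<forall>i j. i < j \<longrightarrow> j < m \<longrightarrow> s i < s j) \<and> (\<forall>i<m. s i < c)}"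

definition max_minor :: "nat \<Rightarrow> rmat \<Rightarrow> (nat \<Rightarrow> nat) \<Rightarrow> real" where
  "max_minor r A s = det_sq r (\<lambda>i j. A i (s j))"

definition minors_nonneg :: "nat \<Rightarrow> nat \<Rightarrow> rmat \<Rightarrow> bool" where
  "minors_nonneg r c A \<longleftrightarrow> (\<forall>s\<in>sel r c. max_minor r A s \<ge> 0)"

definition positive_mat :: "nat \<Rightarrow> nat \<Rightarrow> rmat \<Rightarrow> bool" where
  "positive_mat n m Z \<longleftrightarrow> is_mat n m Z \<and>
     (\<forall>s\<in>sel m n. det_sq m (\<lambda>i j. Z (s i) j) > 0)"

definition mat_mul :: "nat \<Rightarrow> rmat \<Rightarrow> rmat \<Rightarrow> rmat" where
  "mat_mul s A B = (\<lambda>i j. \<Sum>l<s. A i l * B l j)"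

definition rowspan :: "nat \<Rightarrow> rmat \<Rightarrow> (nat \<Rightarrow> real) set" where
  "rowspan r A = {v. \<exists>a. v = (\<lambda>j. \<Sum>i<r. a i * A i j)}"

text \<open>A representative of a point of Gr_{k,c;1} is stored as the single
(k+2) x c matrix [D;C]: rows 0,1 form D, rows 2..k+1 form C.  It must have
full row rank k+2 (so that dim U = k and dim W = k+2).\<close>
definition lowerC :: "rmat \<Rightarrow> rmat" where
  "lowerC A = (\<lambda>i j. A (i + 2) j)"

definition full_row_rank :: "nat \<Rightarrow> nat \<Rightarrow> rmat \<Rightarrow> bool" where
  "full_row_rank r c A \<longleftrightarrow> (\<exists>s\<in>sel r c. max_minor r A s \<noteq> 0)"

definition is_rep :: "nat \<Rightarrow> nat \<Rightarrow> rmat \<Rightarrow> bool" where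
  "is_rep k c A \<longleftrightarrow> is_mat (k + 2) c A \<and> full_row_rank (k + 2) c A"

definition flag_of :: "nat \<Rightarrow> rmat \<Rightarrow> (nat \<Rightarrow> real) set \<times> (nat \<Rightarrow> real) set" where
  "flag_of k A = (rowspan k (lowerC A), rowspan (k + 2) A)"

text \<open>The two-step flag variety Gr_{k,c;1} (pairs U \<subseteq> W of subspaces of R^c
with dim U = k, dim W = k+2) and its nonnegative part.\<close>
definition Gr :: "nat \<Rightarrow> nat \<Rightarrow> ((nat \<Rightarrow> real) set \<times> (nat \<Rightarrow> real) set) set" where
  "Gr k c = flag_of k ` {A. is_rep k c A}"

definition Gr_nonneg :: "nat \<Rightarrow> nat \<Rightarrow> ((nat \<Rightarrow> real) set \<times> (nat \<Rightarrow> real) set) set" where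
  "Gr_nonneg k c = flag_of k ` {A. is_rep k c A \<and> minors_nonneg k c (lowerC A)
                                   \<and> minors_nonneg (k + 2) c A}"

definition mat_open :: "nat \<Rightarrow> nat \<Rightarrow> rmat set \<Rightarrow> bool" where
  "mat_open r c S \<longleftrightarrow> (\<forall>A\<in>S. is_mat r c A \<and> (\<exists>e>0. \<forall>A'. is_mat r c A' \<and>
      (\<forall>i<r. \<forall>j<c. \<bar>A' i j - A i j\<bar> < e) \<longrightarrow> A' \<in> S))"

text \<open>Quotient topology on Gr_{k,c;1}: B is open iff its set of representatives is open.\<close>
definition Gr_open :: "nat \<Rightarrow> nat \<Rightarrow> ((nat \<Rightarrow> real) set \<times> (nat \<Rightarrow> real) set) set \<Rightarrow> bool" where
  "Gr_open k c B \<longleftrightarrow> B \<subseteq> Gr k c \<and> mat_open (k + 2) c {A. is_rep k c A \<and> flag_of k A \<in> B}"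

definition img :: "nat \<Rightarrow> rmat \<Rightarrow> (nat \<Rightarrow> real) set \<Rightarrow> (nat \<Rightarrow> real) set" where
  "img n Z V = (\<lambda>v. (\<lambda>j. \<Sum>i<n. v i * Z i j)) ` V"

definition amp_map :: "nat \<Rightarrow> rmat \<Rightarrow> (nat \<Rightarrow> real) set \<times> (nat \<Rightarrow> real) set
                        \<Rightarrow> (nat \<Rightarrow> real) set \<times> (nat \<Rightarrow> real) set" where
  "amp_map n Z UW = (img n Z (fst UW), img n Z (snd UW))"

text \<open>Lie algebra of the structure group acting on representatives [D;C]:
(k+2) x (k+2) matrices G whose block (rows of C) x (columns of D) vanishes,
i.e. C |-> aC, D |-> eD + fC infinitesimally.\<close>
definition parabolic_lie :: "nat \<Rightarrow> rmat \<Rightarrow> bool" where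
  "parabolic_lie k G \<longleftrightarrow> is_mat (k + 2) (k + 2) G \<and> (\<forall>i j. 2 \<le> i \<longrightarrow> j < 2 \<longrightarrow> G i j = 0)"

text \<open>Submersion condition at a representative A for the map induced by the
(linear, hence smooth) lift A |-> A Z: the differential of the lift plus the
tangent space of the structure-group orbit through A Z (the kernel of the
differential of the quotient map) span all (k+2) x m matrices.\<close>
definition submersive_at :: "nat \<Rightarrow> nat \<Rightarrow> nat \<Rightarrow> rmat \<Rightarrow> rmat \<Rightarrow> bool" where
  "submersive_at k n m Z A \<longleftrightarrow>
     (\<forall>Y. is_mat (k + 2) m Y \<longrightarrow> (\<exists>X G. is_mat (k + 2) n X \<and> parabolic_lie k G \<and>
        Y = (\<lambda>i j. mat_mul n X Z i j + mat_mul (k + 2) G (mat_mul n A Z) i j)))"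

end

theory Submission
  imports Defs "Jordan_Normal_Form.Determinant"
begin

(* Let B consist of the flags having a representative A for which AZ has full rank. Full rank
   is an open condition, and AZ then represents the image flag. Submersivity is automatic: the
   first k+4 rows of Z form an invertible block, so every Y is of the form XZ.

   The content is that B contains the nonnegative part. Suppose A has nonnegative maximal minors
   but vAZ = 0 for some v <> 0. For t1 < t2 let A' be A bordered below by the unit rows e_t1 and
   e_t2; then A'Z is still singular. By Cauchy-Binet, det(A'Z) is the sum over (k+4)-subsets I
   of det(A'_I) det(Z_I), where det(Z_I) > 0 and det(A'_I) is, up to the sign (-1)^(p1+p2+1)
   with p1, p2 the positions of t1, t2 in I, the maximal minor of A on I - {t1, t2}. By induction
   on t2 - t1, every basis J of A meets {t1, t2}: otherwise the induction hypothesis puts every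
   column strictly between t1 and t2 into every basis avoiding t1, so p2 - p1 = t2 - t1 in every
   nonzero term; then all terms have the sign (-1)^(t2-t1+1) and the term for I = J + {t1, t2}
   is nonzero, contradicting det(A'Z) = 0. But n >= k+4 leaves two columns outside any basis. *)

abbreviation sq_mat :: "nat \<Rightarrow> rmat \<Rightarrow> real mat" where
  "sq_mat m A \<equiv> Matrix.mat m m (\<lambda>(i, j). A i j)"

lemma det_sq_eq_det: "det_sq m A = Determinant.det (sq_mat m A)"
  unfolding det_sq_def det_def by (simp add: atLeast0LessThan)

lemma det_sq_cong:
  assumes "\<And>i j. i < m \<Longrightarrow> j < m \<Longrightarrow> X i j = Y i j"
  shows "det_sq m X = det_sq m Y"
  unfolding det_sq_def
proof (intro sum.cong refl arg_cong2[where f = "(*)"] prod.cong)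
  fix p i assume "p \<in> {p. p permutes {..<m}}" "i \<in> {..<m}"
  then show "X i (p i) = Y i (p i)"
    using assms permutes_in_image by fastforce
qed

lemma det_sq_mat_mul: "det_sq m (mat_mul m G X) = det_sq m G * det_sq m X"
proof -
  have "sq_mat m (mat_mul m G X) = sq_mat m G * sq_mat m X"
    by (rule eq_matI) (auto simp: mat_mul_def scalar_prod_def atLeast0LessThan intro!: sum.cong)
  then show ?thesis
    unfolding det_sq_eq_det using det_mult[of "sq_mat m G" m "sq_mat m X"] by simp
qed

lemma det_sq_transpose: "det_sq m (\<lambda>i j. X j i) = det_sq m X"
proof -
  have "sq_mat m (\<lambda>i j. X j i) = transpose_mat (sq_mat m X)"
    by (rule eq_matI) auto
  then show ?thesis
    unfolding det_sq_eq_det using det_transpose[of "sq_mat m X" m] by simp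
qed

lemma det_sq_eq_0_iff_left_kernel:
  "det_sq m X = 0 \<longleftrightarrow> (\<exists>v. (\<forall>j<m. (\<Sum>i<m. v i * X i j) = 0) \<and> (\<exists>i<m. v i \<noteq> 0))"
proof -
  let ?T = "transpose_mat (sq_mat m X)"
  have T: "?T \<in> carrier_mat m m" by auto
  have mult: "(?T *\<^sub>v vec m v) $ j = (\<Sum>i<m. v i * X i j)" if "j < m" for v j
    using that by (simp add: scalar_prod_def atLeast0LessThan mult.commute)
  have "det_sq m X = 0 \<longleftrightarrow> Determinant.det ?T = 0"
    unfolding det_sq_eq_det using det_transpose[of "sq_mat m X" m] by simp
  also have "\<dots> \<longleftrightarrow> (\<exists>v. v \<in> carrier_vec m \<and> v \<noteq> 0\<^sub>v m \<and> ?T *\<^sub>v v = 0\<^sub>v m)"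
    by (rule det_0_iff_vec_prod_zero[OF T])
  also have "\<dots> \<longleftrightarrow> (\<exists>v. (\<forall>j<m. (\<Sum>i<m. v i * X i j) = 0) \<and> (\<exists>i<m. v i \<noteq> 0))"
  proof
    assume "\<exists>v. v \<in> carrier_vec m \<and> v \<noteq> 0\<^sub>v m \<and> ?T *\<^sub>v v = 0\<^sub>v m"
    then obtain v where v: "v \<in> carrier_vec m" "v \<noteq> 0\<^sub>v m" "?T *\<^sub>v v = 0\<^sub>v m" by blast
    have "vec m (\<lambda>i. v $ i) = v" using v(1) by auto
    then show "\<exists>w. (\<forall>j<m. (\<Sum>i<m. w i * X i j) = 0) \<and> (\<exists>i<m. w i \<noteq> 0)"
      using v mult[of _ "\<lambda>i. v $ i"] by (intro exI[of _ "\<lambda>i. v $ i"]) auto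
  next
    assume "\<exists>w. (\<forall>j<m. (\<Sum>i<m. w i * X i j) = 0) \<and> (\<exists>i<m. w i \<noteq> 0)"
    then obtain w where "\<forall>j<m. (\<Sum>i<m. w i * X i j) = 0" "\<exists>i<m. w i \<noteq> 0" by blast
    then show "\<exists>v. v \<in> carrier_vec m \<and> v \<noteq> 0\<^sub>v m \<and> ?T *\<^sub>v v = 0\<^sub>v m"
      using mult[of _ w] by (intro exI[of _ "vec m w"]) (auto simp: vec_eq_iff)
  qed
  finally show ?thesis .
qed

lemma det_sq_permute_rows:
  assumes "p permutes {..<m}"
  shows "det_sq m (\<lambda>i j. X (p i) j) = of_int (sign p) * det_sq m X"
proof -
  have p: "p permutes {0..<m}" using assms by (simp add: atLeast0LessThan)
  have "sq_mat m (\<lambda>i j. X (p i) j) = Matrix.mat m m (\<lambda>(i, j). sq_mat m X $$ (p i, j))"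
    by (rule eq_matI) (use permutes_in_image[OF p] in auto)
  then show ?thesis
    unfolding det_sq_eq_det using det_permute_rows[OF _ p, of "sq_mat m X"] by simp
qed

lemma det_sq_identical_rows:
  assumes "i \<noteq> j" "i < m" "j < m" "\<And>l. l < m \<Longrightarrow> X i l = X j l"
  shows "det_sq m X = 0"
  unfolding det_sq_eq_det
  by (rule det_identical_rows[OF _ assms(1-3)]) (auto intro!: eq_vecI simp: assms)

lemma det_sq_zero_row:
  assumes "i < m" "\<And>l. l < m \<Longrightarrow> X i l = 0"
  shows "det_sq m X = 0"
  unfolding det_sq_def
proof (rule sum.neutral, intro ballI)
  fix p assume "p \<in> {p. p permutes {..<m}}"
  then have "p i < m" using permutes_in_image assms(1) by fastforce
  then show "of_int (sign p) * (\<Prod>i<m. X i (p i)) = 0"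
    using assms by (auto intro!: prod_zero bexI[of _ i])
qed

lemma det_sq_left_inverse:
  assumes "det_sq m Z \<noteq> 0"
  obtains W where "\<And>i j. i < m \<Longrightarrow> j < m \<Longrightarrow> (\<Sum>l<m. W i l * Z l j) = (if i = j then 1 else 0)"
proof -
  let ?A = "sq_mat m Z"
  have A: "?A \<in> carrier_mat m m" by auto
  define d where "d = Determinant.det ?A"
  have d: "d \<noteq> 0" using assms unfolding d_def det_sq_eq_det .
  have adj: "adj_mat ?A * ?A = d \<cdot>\<^sub>m 1\<^sub>m m" "adj_mat ?A \<in> carrier_mat m m"
    using adj_mat[OF A] unfolding d_def by auto
  have "(\<Sum>l<m. (adj_mat ?A $$ (i, l) / d) * Z l j) = (if i = j then 1 else 0)"
    if "i < m" "j < m" for i j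
  proof -
    have "(adj_mat ?A * ?A) $$ (i, j) = (\<Sum>l<m. adj_mat ?A $$ (i, l) * Z l j)"
      using that adj(2) by (simp add: scalar_prod_def atLeast0LessThan)
    then have "(\<Sum>l<m. adj_mat ?A $$ (i, l) * Z l j) = (if i = j then d else 0)"
      using that adj(1) by (cases "i = j") auto
    then show ?thesis
      using d by (simp add: sum_divide_distrib[symmetric])
  qed
  then show thesis by (rule that)
qed

lemma det_sq_last_row_unit:
  assumes "p < Suc m" "\<And>j. j < Suc m \<Longrightarrow> X m j = (if j = p then 1 else 0)"
  shows "det_sq (Suc m) X = (-1) ^ (m + p) * det_sq m (\<lambda>i j. X i (insert_index p j))"
proof -
  let ?A = "sq_mat (Suc m) X"
  have A: "?A \<in> carrier_mat (Suc m) (Suc m)" by auto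
  have "det_sq (Suc m) X = (\<Sum>j<Suc m. ?A $$ (m, j) * cofactor ?A m j)"
    unfolding det_sq_eq_det by (rule laplace_expansion_row[OF A]) auto
  also have "\<dots> = (\<Sum>j<Suc m. if j = p then cofactor ?A m j else 0)"
    by (rule sum.cong) (auto simp: assms(2))
  also have "\<dots> = cofactor ?A m p"
    using assms(1) by simp
  also have "\<dots> = (-1) ^ (m + p) * det_sq m (\<lambda>i j. X i (insert_index p j))"
    unfolding cofactor_def det_sq_eq_det
    by (rule arg_cong[where f = "\<lambda>x. _ * Determinant.det x"], rule eq_matI)
       (auto simp: mat_delete_def insert_index_def)
  finally show ?thesis .
qed

lemma sel_iff: "s \<in> sel m c \<longleftrightarrow> strict_mono_on {..<m} s \<and> (\<forall>i<m. s i < c)"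
  unfolding sel_def monotone_on_def by auto

text \<open>The selections in \<^const>\<open>sel\<close> are unconstrained beyond their length, so finite sums over
selections range over the normalised ones.\<close>

definition sel_fin :: "nat \<Rightarrow> nat \<Rightarrow> (nat \<Rightarrow> nat) set" where
  "sel_fin m c = {s \<in> sel m c. \<forall>i\<ge>m. s i = 0}"

lemma sel_fin_subset_sel: "sel_fin m c \<subseteq> sel m c"
  unfolding sel_fin_def by auto

lemma finite_sel_fin: "finite (sel_fin m c)"
proof (rule finite_subset)
  show "sel_fin m c \<subseteq> (\<lambda>g i. if i < m then g i else 0) ` PiE {..<m} (\<lambda>_. {..<c})"
  proof
    fix s assume s: "s \<in> sel_fin m c"
    then have "s = (\<lambda>i. if i < m then restrict s {..<m} i else 0)"
      unfolding sel_fin_def by (auto simp: fun_eq_iff)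
    moreover have "restrict s {..<m} \<in> PiE {..<m} (\<lambda>_. {..<c})"
      using s unfolding sel_fin_def sel_def by auto
    ultimately show "s \<in> (\<lambda>g i. if i < m then g i else 0) ` PiE {..<m} (\<lambda>_. {..<c})"
      by blast
  qed
qed (auto intro: finite_PiE)

lemma strict_mono_on_image_eqD:
  fixes s s' :: "nat \<Rightarrow> nat"
  assumes "strict_mono_on {..<m} s" "strict_mono_on {..<m} s'"
    and "s ` {..<m} = s' ` {..<m}" and "i < m"
  shows "s i = s' i"
proof -
  have "sorted_wrt (<) (map f [0..<m])" if "strict_mono_on {..<m} f" for f :: "nat \<Rightarrow> nat"
    using that by (auto simp: sorted_wrt_iff_nth_less intro: strict_mono_onD)
  moreover have "set (map s [0..<m]) = set (map s' [0..<m])"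
    using assms(3) by (simp add: atLeast0LessThan)
  ultimately have "map s [0..<m] = map s' [0..<m]"
    using assms(1,2) strict_sorted_equal by metis
  then show ?thesis
    using assms(4) by (metis diff_zero length_upt nth_map nth_upt plus_nat.add_0)
qed

lemma sel_image_eqD:
  assumes "s \<in> sel m c" "s' \<in> sel m c" "s ` {..<m} = s' ` {..<m}" "i < m"
  shows "s i = s' i"
  using assms strict_mono_on_image_eqD unfolding sel_iff by blast

lemma sel_fin_enumerates:
  assumes "finite S" "card S = m" "S \<subseteq> {..<c}"
  obtains s where "s \<in> sel_fin m c" "s ` {..<m} = S"
proof -
  define xs where "xs = sorted_list_of_set S"
  have xs: "sorted_wrt (<) xs" "length xs = m" "set xs = S"
    using assms unfolding xs_def by auto
  define s where "s i = (if i < m then xs ! i else 0)" for i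
  have im: "s ` {..<m} = S"
  proof -
    have "s ` {..<m} = (\<lambda>i. xs ! i) ` {..<length xs}"
      using xs(2) unfolding s_def by auto
    also have "\<dots> = S"
      using xs(3) by (auto simp: in_set_conv_nth)
    finally show ?thesis .
  qed
  have "s \<in> sel_fin m c"
    unfolding sel_fin_def sel_def
    using xs(1,2) im assms(3) by (auto simp: s_def sorted_wrt_iff_nth_less)
  then show thesis using im by (rule that)
qed

section \<open>Cauchy--Binet formula\<close>

lemma det_sq_mat_mul_expand:
  "det_sq m (mat_mul c A B) =
     (\<Sum>g\<in>PiE {..<m} (\<lambda>_. {..<c}). (\<Prod>i<m. A i (g i)) * det_sq m (\<lambda>i j. B (g i) j))"
proof -
  let ?P = "{p. p permutes {..<m}}"
  let ?F = "PiE {..<m} (\<lambda>_. {..<c})"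
  have "det_sq m (mat_mul c A B) =
     (\<Sum>p\<in>?P. of_int (sign p) * (\<Sum>g\<in>?F. \<Prod>i<m. A i (g i) * B (g i) (p i)))"
    unfolding det_sq_def mat_mul_def
    by (intro sum.cong refl arg_cong2[where f = "(*)"] prod_sum_PiE) auto
  also have "\<dots> = (\<Sum>g\<in>?F. \<Sum>p\<in>?P. (\<Prod>i<m. A i (g i)) * (of_int (sign p) * (\<Prod>i<m. B (g i) (p i))))"
    by (subst sum.swap) (simp add: sum_distrib_left prod.distrib mult_ac)
  also have "\<dots> = (\<Sum>g\<in>?F. (\<Prod>i<m. A i (g i)) * det_sq m (\<lambda>i j. B (g i) j))"
    unfolding det_sq_def by (simp add: sum_distrib_left)
  finally show ?thesis .
qed

lemma inj_on_sel_fin_permutes: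
  "inj_on (\<lambda>(s, p). restrict (s \<circ> p) {..<m}) (sel_fin m c \<times> {p. p permutes {..<m}})"
proof (rule inj_onI)
  fix x y assume x: "x \<in> sel_fin m c \<times> {p. p permutes {..<m}}"
    and y: "y \<in> sel_fin m c \<times> {p. p permutes {..<m}}"
    and eq0: "(\<lambda>(s, p). restrict (s \<circ> p) {..<m}) x = (\<lambda>(s, p). restrict (s \<circ> p) {..<m}) y"
  obtain s p s' p' where xy: "x = (s, p)" "y = (s', p')" by (cases x, cases y)
  have s: "s \<in> sel_fin m c" "s' \<in> sel_fin m c" and p: "p permutes {..<m}" "p' permutes {..<m}"
    using x y xy by auto
  have sel: "s \<in> sel m c" "s' \<in> sel m c"
    using s sel_fin_subset_sel by auto
  have eq: "s (p i) = s' (p' i)" if "i < m" for i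
    using fun_cong[OF eq0, of i] that xy by simp
  have "s ` {..<m} = s ` p ` {..<m}"
    using p(1) by (simp add: permutes_image)
  also have "\<dots> = s' ` p' ` {..<m}"
    using eq by (auto simp: image_iff)
  also have "\<dots> = s' ` {..<m}"
    using p(2) by (simp add: permutes_image)
  finally have ss: "s i = s' i" if "i < m" for i
    using sel_image_eqD[OF sel] that by blast
  have "s = s'"
  proof
    fix i show "s i = s' i"
      using s ss unfolding sel_fin_def by (cases "i < m") auto
  qed
  moreover have "p = p'"
  proof
    fix i show "p i = p' i"
    proof (cases "i < m")
      case True
      then have "p i < m" "p' i < m"
        using p permutes_in_image by fastforce+
      moreover have "s (p i) = s (p' i)"
        using eq[OF True] ss \<open>p' i < m\<close> by simp
      moreover have "inj_on s {..<m}"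
        using sel(1) strict_mono_on_imp_inj_on unfolding sel_iff by blast
      ultimately show ?thesis
        by (auto dest: inj_onD)
    qed (use p in \<open>simp add: permutes_not_in\<close>)
  qed
  ultimately show "x = y" using xy by simp
qed

lemma image_sel_fin_permutes:
  "(\<lambda>(s, p). restrict (s \<circ> p) {..<m}) ` (sel_fin m c \<times> {p. p permutes {..<m}}) =
     {g \<in> PiE {..<m} (\<lambda>_. {..<c}). inj_on g {..<m}}"
proof (intro equalityI subsetI)
  fix x assume "x \<in> (\<lambda>(s, p). restrict (s \<circ> p) {..<m}) ` (sel_fin m c \<times> {p. p permutes {..<m}})"
  then obtain s p where x: "x = restrict (s \<circ> p) {..<m}" and s: "s \<in> sel_fin m c"
    and p: "p permutes {..<m}" by auto
  have "s \<in> sel m c"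
    using s sel_fin_subset_sel by blast
  then have "inj_on s {..<m}" "\<forall>i<m. s i < c"
    unfolding sel_iff by (auto intro: strict_mono_on_imp_inj_on)
  moreover have "p ` {..<m} = {..<m}" "inj_on p {..<m}"
    using p by (auto simp: permutes_image permutes_inj_on)
  ultimately have "inj_on (s \<circ> p) {..<m}" "\<forall>i<m. s (p i) < c"
    by (auto intro: comp_inj_on)
  then show "x \<in> {g \<in> PiE {..<m} (\<lambda>_. {..<c}). inj_on g {..<m}}"
    unfolding x by (auto simp: inj_on_def)
next
  fix g assume "g \<in> {g \<in> PiE {..<m} (\<lambda>_. {..<c}). inj_on g {..<m}}"
  then have g: "g \<in> PiE {..<m} (\<lambda>_. {..<c})" "inj_on g {..<m}" by auto
  obtain s where s: "s \<in> sel_fin m c" "s ` {..<m} = g ` {..<m}"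
    using sel_fin_enumerates[of "g ` {..<m}" m c] g by (auto simp: card_image)
  define p where "p i = (if i < m then inv_into {..<m} s (g i) else i)" for i
  have ps: "s (p i) = g i" "p i < m" if "i < m" for i
  proof -
    have "g i \<in> s ` {..<m}" using s(2) that by blast
    then show "s (p i) = g i" "p i < m"
      unfolding p_def using that inv_into_into[of "g i" s "{..<m}"] by (auto intro: f_inv_into_f)
  qed
  have "inj_on p {..<m}"
    using g(2) ps(1) by (metis inj_on_def lessThan_iff)
  moreover have "p ` {..<m} = {..<m}"
    using ps(2) calculation by (intro endo_inj_surj) auto
  ultimately have "p permutes {..<m}"
    by (intro bij_imp_permutes) (auto simp: bij_betw_def p_def)
  moreover have "g = restrict (s \<circ> p) {..<m}"
    using g(1) ps by (auto simp: fun_eq_iff PiE_def extensional_def)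
  ultimately show "g \<in> (\<lambda>(s, p). restrict (s \<circ> p) {..<m}) ` (sel_fin m c \<times> {p. p permutes {..<m}})"
    using s(1) by (auto intro!: image_eqI[where x = "(s, p)"])
qed

theorem cauchy_binet:
  "det_sq m (mat_mul c A B) =
     (\<Sum>s\<in>sel_fin m c. det_sq m (\<lambda>i j. A i (s j)) * det_sq m (\<lambda>i j. B (s i) j))"
proof -
  let ?P = "{p. p permutes {..<m}}"
  let ?F = "PiE {..<m} (\<lambda>_. {..<c})"
  define h where "h g = (\<Prod>i<m. A i (g i)) * det_sq m (\<lambda>i j. B (g i) j)" for g
  have "det_sq m (mat_mul c A B) = (\<Sum>g\<in>?F. h g)"
    unfolding det_sq_mat_mul_expand h_def ..
  also have "\<dots> = (\<Sum>g\<in>{g \<in> ?F. inj_on g {..<m}}. h g)"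
  proof (rule sum.mono_neutral_right)
    show "\<forall>g\<in>?F - {g \<in> ?F. inj_on g {..<m}}. h g = 0"
    proof
      fix g assume "g \<in> ?F - {g \<in> ?F. inj_on g {..<m}}"
      then obtain i j where "i < m" "j < m" "i \<noteq> j" "g i = g j"
        by (auto simp: inj_on_def)
      then have "det_sq m (\<lambda>i j. B (g i) j) = 0"
        by (intro det_sq_identical_rows[of i j]) auto
      then show "h g = 0" unfolding h_def by simp
    qed
  qed (auto intro: finite_PiE)
  also have "\<dots> = (\<Sum>(s, p)\<in>sel_fin m c \<times> ?P. h (restrict (s \<circ> p) {..<m}))"
    using sum.reindex_bij_betw[OF bij_betw_imageI[OF inj_on_sel_fin_permutes image_sel_fin_permutes], of h]
    by (simp add: case_prod_beta')
  also have "\<dots> = (\<Sum>s\<in>sel_fin m c. \<Sum>p\<in>?P. h (s \<circ> p))"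
    unfolding sum.cartesian_product[symmetric] h_def
    by (intro sum.cong refl) (auto intro!: prod.cong det_sq_cong arg_cong2[where f = "(*)"])
  also have "\<dots> = (\<Sum>s\<in>sel_fin m c. det_sq m (\<lambda>i j. A i (s j)) * det_sq m (\<lambda>i j. B (s i) j))"
  proof (rule sum.cong[OF refl])
    fix s
    have "h (s \<circ> p) = of_int (sign p) * (\<Prod>i<m. A i (s (p i))) * det_sq m (\<lambda>i j. B (s i) j)"
      if "p \<in> ?P" for p
      using that det_sq_permute_rows[of p m "\<lambda>i j. B (s i) j"] unfolding h_def by (simp add: mult_ac)
    then show "(\<Sum>p\<in>?P. h (s \<circ> p)) = det_sq m (\<lambda>i j. A i (s j)) * det_sq m (\<lambda>i j. B (s i) j)"
      unfolding det_sq_def[of m "\<lambda>i j. A i (s j)"] by (simp add: sum_distrib_right)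
  qed
  finally show ?thesis .
qed

lemma det_sq_gram_ne_0:
  assumes indep: "\<And>v. \<forall>j<c. (\<Sum>i<m. v i * X i j) = 0 \<Longrightarrow> \<forall>i<m. v i = 0"
  shows "det_sq m (mat_mul c X (\<lambda>i j. X j i)) \<noteq> 0"
proof
  define G where "G = mat_mul c X (\<lambda>i j. X j i)"
  assume "det_sq m (mat_mul c X (\<lambda>i j. X j i)) = 0"
  then obtain w where w: "\<forall>j<m. (\<Sum>i<m. w i * G i j) = 0" and "\<exists>i<m. w i \<noteq> 0"
    unfolding det_sq_eq_0_iff_left_kernel G_def[symmetric] by blast
  define u where "u l = (\<Sum>i<m. w i * X i l)" for l
  have "(\<Sum>l<c. u l * u l) = (\<Sum>l<c. \<Sum>i<m. \<Sum>j<m. w i * X i l * (w j * X j l))"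
    unfolding u_def by (simp add: sum_product)
  also have "\<dots> = (\<Sum>i<m. \<Sum>l<c. \<Sum>j<m. w i * X i l * (w j * X j l))"
    by (rule sum.swap)
  also have "\<dots> = (\<Sum>i<m. \<Sum>j<m. \<Sum>l<c. w i * X i l * (w j * X j l))"
    by (rule sum.cong[OF refl], rule sum.swap)
  also have "\<dots> = (\<Sum>i<m. w i * (\<Sum>j<m. w j * G j i))"
    unfolding G_def mat_mul_def by (simp add: sum_distrib_left mult_ac)
  also have "\<dots> = 0"
    using w by simp
  finally have "\<forall>l<c. u l * u l = 0"
    by (subst (asm) sum_nonneg_eq_0_iff) auto
  then have "\<forall>i<m. w i = 0"
    by (intro indep) (simp add: u_def)
  then show False
    using \<open>\<exists>i<m. w i \<noteq> 0\<close> by auto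
qed

text \<open>By Cauchy--Binet, the Gram determinant is the sum of the squared maximal minors.\<close>

lemma full_row_rank_if_rows_independent:
  assumes "\<And>v. \<forall>j<c. (\<Sum>i<m. v i * X i j) = 0 \<Longrightarrow> \<forall>i<m. v i = 0"
  shows "full_row_rank m c X"
proof -
  have "det_sq m (mat_mul c X (\<lambda>i j. X j i)) =
        (\<Sum>t\<in>sel_fin m c. det_sq m (\<lambda>i j. X i (t j)) * det_sq m (\<lambda>i j. X i (t j)))"
    unfolding cauchy_binet
    by (rule sum.cong[OF refl]) (subst det_sq_transpose[symmetric], rule refl)
  with det_sq_gram_ne_0[where c = c and m = m and X = X, OF assms]
  have "(\<Sum>t\<in>sel_fin m c. det_sq m (\<lambda>i j. X i (t j)) * det_sq m (\<lambda>i j. X i (t j))) \<noteq> 0"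
    by simp
  then obtain t where "t \<in> sel_fin m c" "det_sq m (\<lambda>i j. X i (t j)) \<noteq> 0"
    using sum.neutral by force
  then show ?thesis
    unfolding full_row_rank_def max_minor_def using sel_fin_subset_sel by blast
qed

section \<open>Nonnegative minors against a positive matrix\<close>

definition border_units :: "nat \<Rightarrow> rmat \<Rightarrow> nat \<Rightarrow> nat \<Rightarrow> rmat" where
  "border_units r A t1 t2 = (\<lambda>i l. if i < r then A i l
     else if i = r then (if l = t1 then 1 else 0)
     else if i = Suc r then (if l = t2 then 1 else 0) else 0)"

lemma det_border_units_eq_0:
  assumes "t1 \<notin> I ` {..<Suc (Suc r)} \<or> t2 \<notin> I ` {..<Suc (Suc r)}"
  shows "det_sq (Suc (Suc r)) (\<lambda>i j. border_units r A t1 t2 i (I j)) = 0"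
  using assms
proof
  assume "t1 \<notin> I ` {..<Suc (Suc r)}"
  then show ?thesis
    by (intro det_sq_zero_row[of r]) (auto simp: border_units_def)
next
  assume "t2 \<notin> I ` {..<Suc (Suc r)}"
  then show ?thesis
    by (intro det_sq_zero_row[of "Suc r"]) (auto simp: border_units_def)
qed

lemma det_border_units_expand:
  assumes I: "inj_on I {..<Suc (Suc r)}"
    and p: "p1 < p2" "p2 < Suc (Suc r)" "I p1 = t1" "I p2 = t2"
  shows "det_sq (Suc (Suc r)) (\<lambda>i j. border_units r A t1 t2 i (I j)) =
         (-1) ^ (p1 + p2 + 1) * det_sq r (\<lambda>i j. A i (I (insert_index p2 (insert_index p1 j))))"
proof -
  define X where "X = (\<lambda>i j. border_units r A t1 t2 i (I j))"
  have "det_sq (Suc (Suc r)) X =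
        (-1) ^ (Suc r + p2) * det_sq (Suc r) (\<lambda>i j. X i (insert_index p2 j))"
  proof (rule det_sq_last_row_unit[OF p(2)])
    fix j assume "j < Suc (Suc r)"
    then have "I j = t2 \<longleftrightarrow> j = p2"
      using I p by (auto dest: inj_onD)
    then show "X (Suc r) j = (if j = p2 then 1 else 0)"
      unfolding X_def border_units_def by simp
  qed
  also have "det_sq (Suc r) (\<lambda>i j. X i (insert_index p2 j)) =
             (-1) ^ (r + p1) * det_sq r (\<lambda>i j. X i (insert_index p2 (insert_index p1 j)))"
  proof (rule det_sq_last_row_unit)
    show "p1 < Suc r" using p by simp
    fix j assume "j < Suc r"
    then have "insert_index p2 j < Suc (Suc r)"
      by (simp add: insert_index_def)
    then have "I (insert_index p2 j) = t1 \<longleftrightarrow> insert_index p2 j = p1"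
      using I p by (auto dest: inj_onD)
    also have "\<dots> \<longleftrightarrow> j = p1"
      using p(1) by (auto simp: insert_index_def)
    finally show "X r (insert_index p2 j) = (if j = p1 then 1 else 0)"
      unfolding X_def border_units_def by simp
  qed
  also have "det_sq r (\<lambda>i j. X i (insert_index p2 (insert_index p1 j))) =
             det_sq r (\<lambda>i j. A i (I (insert_index p2 (insert_index p1 j))))"
    by (rule det_sq_cong) (simp add: X_def border_units_def)
  also have "(-1::real) ^ (Suc r + p2) * (-1) ^ (r + p1) = (-1) ^ (p1 + p2 + 1)"
  proof -
    have "Suc r + p2 + (r + p1) = (p1 + p2 + 1) + 2 * r" by simp
    then show ?thesis
      by (simp only: power_add[symmetric]) (simp add: power_add power_mult)
  qed
  ultimately show ?thesis
    unfolding X_def by (simp add: mult.assoc)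
qed

lemma sel_comp_insert_index:
  assumes I: "I \<in> sel (Suc (Suc r)) n" and p: "p1 < p2" "p2 < Suc (Suc r)"
  shows "(\<lambda>j. I (insert_index p2 (insert_index p1 j))) \<in> sel r n"
    and "(\<lambda>j. I (insert_index p2 (insert_index p1 j))) ` {..<r} = I ` ({..<Suc (Suc r)} - {p1, p2})"
proof -
  have mono: "insert_index p2 (insert_index p1 i) < insert_index p2 (insert_index p1 j)"
    if "i < j" for i j
    using that by (simp add: insert_index_def)
  have range: "(\<lambda>j. insert_index p2 (insert_index p1 j)) ` {..<r} = {..<Suc (Suc r)} - {p1, p2}"
  proof
    show "(\<lambda>j. insert_index p2 (insert_index p1 j)) ` {..<r} \<subseteq> {..<Suc (Suc r)} - {p1, p2}"
      using p by (auto simp: insert_index_def)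
    show "{..<Suc (Suc r)} - {p1, p2} \<subseteq> (\<lambda>j. insert_index p2 (insert_index p1 j)) ` {..<r}"
    proof
      fix x assume x: "x \<in> {..<Suc (Suc r)} - {p1, p2}"
      define y where "y = (if x < p2 then x else x - 1)"
      define j where "j = (if y < p1 then y else y - 1)"
      have "insert_index p2 (insert_index p1 j) = x" "j < r"
        using x p unfolding y_def j_def insert_index_def by auto
      then show "x \<in> (\<lambda>j. insert_index p2 (insert_index p1 j)) ` {..<r}"
        by force
    qed
  qed
  then show "(\<lambda>j. I (insert_index p2 (insert_index p1 j))) ` {..<r} = I ` ({..<Suc (Suc r)} - {p1, p2})"
    by (metis image_image)
  show "(\<lambda>j. I (insert_index p2 (insert_index p1 j))) \<in> sel r n"
    unfolding sel_def
  proof (intro CollectI conjI allI impI)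
    fix i j assume "i < j" "j < r"
    moreover have "insert_index p2 (insert_index p1 j) < Suc (Suc r)"
      using range \<open>j < r\<close> by blast
    ultimately show "I (insert_index p2 (insert_index p1 i)) < I (insert_index p2 (insert_index p1 j))"
      using I mono unfolding sel_def by blast
  next
    fix i assume "i < r"
    then have "insert_index p2 (insert_index p1 i) < Suc (Suc r)"
      using range by blast
    then show "I (insert_index p2 (insert_index p1 i)) < n"
      using I unfolding sel_def by blast
  qed
qed

lemma strict_mono_on_gap:
  fixes I :: "nat \<Rightarrow> nat"
  assumes mono: "strict_mono_on {..<M} I" and p: "p1 \<le> p2" "p2 < M"
    and fill: "{I p1..I p2} \<subseteq> I ` {..<M}"
  shows "I p2 - I p1 = p2 - p1"
proof -
  have le: "I x \<le> I y \<longleftrightarrow> x \<le> y" if "x < M" "y < M" for x y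
    using strict_mono_on_less_eq[OF mono] that by simp
  have "{I p1..I p2} = I ` {p1..p2}"
  proof
    show "{I p1..I p2} \<subseteq> I ` {p1..p2}"
    proof
      fix w assume w: "w \<in> {I p1..I p2}"
      then obtain x where "x < M" "w = I x"
        using fill by blast
      then show "w \<in> I ` {p1..p2}"
        using w le p by auto
    qed
    show "I ` {p1..p2} \<subseteq> {I p1..I p2}"
      using le p by auto
  qed
  moreover have "inj_on I {p1..p2}"
    using strict_mono_on_imp_inj_on[OF mono] p by (auto intro: inj_on_subset)
  ultimately have "card {I p1..I p2} = card {p1..p2}"
    by (simp add: card_image)
  moreover have "I p1 \<le> I p2"
    using le p by simp
  ultimately show ?thesis
    using p by simp
qed

lemma det_border_units_eq_max_minor:
  assumes I: "I \<in> sel (Suc (Suc r)) n" and t: "t1 < t2"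
    and t_in: "t1 \<in> I ` {..<Suc (Suc r)}" "t2 \<in> I ` {..<Suc (Suc r)}"
  obtains p1 p2 J where "p1 < p2" "p2 < Suc (Suc r)" "I p1 = t1" "I p2 = t2"
    "J \<in> sel r n" "J ` {..<r} = I ` {..<Suc (Suc r)} - {t1, t2}"
    "det_sq (Suc (Suc r)) (\<lambda>i j. border_units r A t1 t2 i (I j)) = (-1) ^ (p1 + p2 + 1) * max_minor r A J"
proof -
  obtain p1 p2 where p: "p1 < Suc (Suc r)" "p2 < Suc (Suc r)" "I p1 = t1" "I p2 = t2"
    using t_in by (metis imageE lessThan_iff)
  have mono: "strict_mono_on {..<Suc (Suc r)} I"
    using I unfolding sel_iff by blast
  then have inj: "inj_on I {..<Suc (Suc r)}"
    by (rule strict_mono_on_imp_inj_on)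
  have p12: "p1 < p2"
    using strict_mono_on_less[OF mono] p t by auto
  define J where "J j = I (insert_index p2 (insert_index p1 j))" for j
  have J: "J \<in> sel r n"
    unfolding J_def using sel_comp_insert_index(1)[OF I p12 p(2)] .
  have "J ` {..<r} = I ` ({..<Suc (Suc r)} - {p1, p2})"
    unfolding J_def using sel_comp_insert_index(2)[OF I p12 p(2)] .
  also have "\<dots> = I ` {..<Suc (Suc r)} - I ` {p1, p2}"
    by (rule inj_on_image_set_diff[OF inj]) (use p in auto)
  finally have image: "J ` {..<r} = I ` {..<Suc (Suc r)} - {t1, t2}"
    using p by simp
  have "det_sq (Suc (Suc r)) (\<lambda>i j. border_units r A t1 t2 i (I j)) =
        (-1) ^ (p1 + p2 + 1) * max_minor r A J"
    unfolding max_minor_def J_def by (rule det_border_units_expand[OF inj p12 p(2-4)])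
  then show thesis
    by (rule that[OF p12 p(2-4) J image])
qed

lemma det_border_units_sign:
  assumes A: "minors_nonneg r n A" and I: "I \<in> sel (Suc (Suc r)) n" and t: "t1 < t2"
    and gap: "\<And>w J. t1 < w \<Longrightarrow> w < t2 \<Longrightarrow> J \<in> sel r n \<Longrightarrow> max_minor r A J \<noteq> 0 \<Longrightarrow>
                t1 \<notin> J ` {..<r} \<Longrightarrow> w \<in> J ` {..<r}"
  shows "0 \<le> (-1) ^ (t2 - t1 + 1) * det_sq (Suc (Suc r)) (\<lambda>i j. border_units r A t1 t2 i (I j))"
proof (cases "t1 \<in> I ` {..<Suc (Suc r)} \<and> t2 \<in> I ` {..<Suc (Suc r)}")
  case False
  then show ?thesis
    by (subst det_border_units_eq_0) auto
next
  case True
  obtain p1 p2 J where p: "p1 < p2" "p2 < Suc (Suc r)" "I p1 = t1" "I p2 = t2"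
    and J: "J \<in> sel r n" "J ` {..<r} = I ` {..<Suc (Suc r)} - {t1, t2}"
    and expand: "det_sq (Suc (Suc r)) (\<lambda>i j. border_units r A t1 t2 i (I j)) =
                 (-1) ^ (p1 + p2 + 1) * max_minor r A J"
    by (rule det_border_units_eq_max_minor[OF I t True[THEN conjunct1] True[THEN conjunct2]])
  show ?thesis
  proof (cases "max_minor r A J = 0")
    case True
    then show ?thesis using expand by simp
  next
    case False
    have "{t1..t2} \<subseteq> I ` {..<Suc (Suc r)}"
    proof
      fix w assume w: "w \<in> {t1..t2}"
      show "w \<in> I ` {..<Suc (Suc r)}"
      proof (cases "w = t1 \<or> w = t2")
        case False
        then have "w \<in> J ` {..<r}"
          using w gap[OF _ _ J(1) \<open>max_minor r A J \<noteq> 0\<close>] J(2) by auto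
        then show ?thesis using J(2) by auto
      qed (use True in auto)
    qed
    then have "t2 - t1 = p2 - p1"
      using strict_mono_on_gap[of "Suc (Suc r)" I p1 p2] I p unfolding sel_iff by auto
    then have exps: "(t2 - t1 + 1) + (p1 + p2 + 1) = 2 * (p2 + 1)"
      using p(1) by simp
    have "(-1::real) ^ (t2 - t1 + 1) * (-1) ^ (p1 + p2 + 1) = (-1) ^ (2 * (p2 + 1))"
      unfolding power_add[symmetric] by (simp only: exps)
    also have "\<dots> = 1"
      by (simp only: power_mult) simp
    finally show ?thesis
      using A J(1) unfolding expand minors_nonneg_def by (simp add: mult.assoc[symmetric])
  qed
qed

lemma det_border_units_ne_0:
  assumes J0: "J0 \<in> sel r n" "max_minor r A J0 \<noteq> 0" "t1 \<notin> J0 ` {..<r}" "t2 \<notin> J0 ` {..<r}"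
    and t: "t1 < t2" "t2 < n"
  obtains I where "I \<in> sel_fin (Suc (Suc r)) n"
    "det_sq (Suc (Suc r)) (\<lambda>i j. border_units r A t1 t2 i (I j)) \<noteq> 0"
proof -
  define S where "S = insert t1 (insert t2 (J0 ` {..<r}))"
  have "inj_on J0 {..<r}"
    using J0(1) strict_mono_on_imp_inj_on unfolding sel_iff by blast
  then have card: "card S = Suc (Suc r)"
    using J0(3,4) t(1) unfolding S_def by (simp add: card_image)
  have sub: "S \<subseteq> {..<n}"
    using J0(1) t unfolding S_def sel_def by auto
  obtain I where I: "I \<in> sel_fin (Suc (Suc r)) n" "I ` {..<Suc (Suc r)} = S"
    using sel_fin_enumerates[OF _ card sub] unfolding S_def by blast
  have t_in: "t1 \<in> I ` {..<Suc (Suc r)}" "t2 \<in> I ` {..<Suc (Suc r)}"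
    using I(2) unfolding S_def by auto
  have "I \<in> sel (Suc (Suc r)) n"
    using I(1) sel_fin_subset_sel by blast
  then obtain p1 p2 J where "p1 < p2" "p2 < Suc (Suc r)" "I p1 = t1" "I p2 = t2"
    and J: "J \<in> sel r n" "J ` {..<r} = I ` {..<Suc (Suc r)} - {t1, t2}"
    and expand: "det_sq (Suc (Suc r)) (\<lambda>i j. border_units r A t1 t2 i (I j)) =
                 (-1) ^ (p1 + p2 + 1) * max_minor r A J"
    by (rule det_border_units_eq_max_minor[OF _ t(1) t_in])
  have "J ` {..<r} = J0 ` {..<r}"
    using J(2) J0(3,4) I(2) unfolding S_def by auto
  then have "max_minor r A J = max_minor r A J0"
    unfolding max_minor_def using sel_image_eqD[OF J(1) J0(1)] by (intro det_sq_cong) auto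
  then show thesis
    using that[OF I(1)] J0(2) expand by simp
qed

lemma det_border_units_mul_ne_0:
  assumes A: "minors_nonneg r n A" and Z: "positive_mat n (Suc (Suc r)) Z"
    and t: "t1 < t2" "t2 < n"
    and J0: "J0 \<in> sel r n" "max_minor r A J0 \<noteq> 0" "t1 \<notin> J0 ` {..<r}" "t2 \<notin> J0 ` {..<r}"
    and gap: "\<And>w J. t1 < w \<Longrightarrow> w < t2 \<Longrightarrow> J \<in> sel r n \<Longrightarrow> max_minor r A J \<noteq> 0 \<Longrightarrow>
                t1 \<notin> J ` {..<r} \<Longrightarrow> w \<in> J ` {..<r}"
  shows "det_sq (Suc (Suc r)) (mat_mul n (border_units r A t1 t2) Z) \<noteq> 0"
proof -
  let ?M = "Suc (Suc r)" and ?e = "(-1::real) ^ (t2 - t1 + 1)"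
  define summand where "summand I =
    ?e * det_sq ?M (\<lambda>i j. border_units r A t1 t2 i (I j)) * det_sq ?M (\<lambda>i j. Z (I i) j)" for I
  have Zpos: "0 < det_sq ?M (\<lambda>i j. Z (I i) j)" if "I \<in> sel_fin ?M n" for I
    using Z that sel_fin_subset_sel unfolding positive_mat_def by blast
  have sign: "0 \<le> ?e * det_sq ?M (\<lambda>i j. border_units r A t1 t2 i (I j))"
    if "I \<in> sel_fin ?M n" for I
    using det_border_units_sign[OF A _ t(1) gap] that sel_fin_subset_sel by blast
  obtain I0 where I0: "I0 \<in> sel_fin ?M n" "det_sq ?M (\<lambda>i j. border_units r A t1 t2 i (I0 j)) \<noteq> 0"
    using det_border_units_ne_0[OF J0 t] by blast
  have "0 < (\<Sum>I\<in>sel_fin ?M n. summand I)"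
  proof (rule sum_pos2[OF finite_sel_fin I0(1)])
    have "?e * det_sq ?M (\<lambda>i j. border_units r A t1 t2 i (I0 j)) \<noteq> 0"
      using I0(2) by simp
    then have "0 < ?e * det_sq ?M (\<lambda>i j. border_units r A t1 t2 i (I0 j))"
      by (intro le_neq_trans[OF sign[OF I0(1)]]) simp
    then show "0 < summand I0"
      unfolding summand_def using Zpos[OF I0(1)] by (rule mult_pos_pos)
    show "0 \<le> summand I" if "I \<in> sel_fin ?M n" for I
      unfolding summand_def using sign[OF that] less_imp_le[OF Zpos[OF that]]
      by (rule mult_nonneg_nonneg)
  qed
  also have "\<dots> = ?e * det_sq ?M (mat_mul n (border_units r A t1 t2) Z)"
    unfolding cauchy_binet summand_def by (simp add: sum_distrib_left mult.assoc)
  finally show ?thesis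
    by auto
qed

lemma det_border_units_mul_eq_0:
  assumes "i0 < r" "v i0 \<noteq> 0" "\<forall>j<Suc (Suc r). (\<Sum>i<r. v i * mat_mul n A Z i j) = 0"
  shows "det_sq (Suc (Suc r)) (mat_mul n (border_units r A t1 t2) Z) = 0"
  unfolding det_sq_eq_0_iff_left_kernel
proof (intro exI[of _ "\<lambda>i. if i < r then v i else 0"] conjI allI impI)
  fix j assume "j < Suc (Suc r)"
  have "(\<Sum>i<Suc (Suc r). (if i < r then v i else 0) * mat_mul n (border_units r A t1 t2) Z i j) =
        (\<Sum>i<r. v i * mat_mul n A Z i j)"
    by (simp add: mat_mul_def border_units_def)
  then show "(\<Sum>i<Suc (Suc r). (if i < r then v i else 0) * mat_mul n (border_units r A t1 t2) Z i j) = 0"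
    using assms(3) \<open>j < Suc (Suc r)\<close> by simp
next
  show "\<exists>i<Suc (Suc r). (if i < r then v i else 0) \<noteq> 0"
    using assms(1,2) by (intro exI[of _ i0]) auto
qed

lemma sel_avoids_two:
  assumes "J \<in> sel r n" "r + 2 \<le> n"
  obtains t1 t2 where "t1 < t2" "t2 < n" "t1 \<notin> J ` {..<r}" "t2 \<notin> J ` {..<r}"
proof -
  have "inj_on J {..<r}"
    using assms(1) strict_mono_on_imp_inj_on unfolding sel_iff by blast
  then have "card (J ` {..<r}) = r"
    by (simp add: card_image)
  moreover have "J ` {..<r} \<subseteq> {..<n}"
    using assms(1) unfolding sel_def by auto
  ultimately have "2 \<le> card ({..<n} - J ` {..<r})"
    using assms(2) by (simp add: card_Diff_subset)
  then obtain B where B: "B \<subseteq> {..<n} - J ` {..<r}" "card B = 2"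
    using ex_card by blast
  then obtain a b where "B = {a, b}" "a \<noteq> b"
    unfolding card_2_iff by blast
  then have "min a b < max a b" "max a b < n" "min a b \<notin> J ` {..<r}" "max a b \<notin> J ` {..<r}"
    using B by (auto simp: min_def max_def)
  then show thesis
    by (rule that)
qed

lemma rows_independent_mat_mul_positive:
  assumes n: "r + 2 \<le> n" and A: "minors_nonneg r n A" "full_row_rank r n A"
    and Z: "positive_mat n (r + 2) Z"
    and v: "\<forall>j<r + 2. (\<Sum>i<r. v i * mat_mul n A Z i j) = 0"
  shows "\<forall>i<r. v i = 0"
proof (rule ccontr)
  assume "\<not> (\<forall>i<r. v i = 0)"
  then obtain i0 where i0: "i0 < r" "v i0 \<noteq> 0" by blast
  have singular: "det_sq (Suc (Suc r)) (mat_mul n (border_units r A t1 t2) Z) = 0" for t1 t2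
    using det_border_units_mul_eq_0[of i0 r v] i0 v by simp
  have meets: "t1 \<in> J ` {..<r} \<or> t2 \<in> J ` {..<r}"
    if "t1 < t2" "t2 < n" "J \<in> sel r n" "max_minor r A J \<noteq> 0" for t1 t2 J
    using that
  proof (induction "t2 - t1" arbitrary: t2 J rule: less_induct)
    case less
    show ?case
    proof (rule ccontr)
      assume avoid: "\<not> (t1 \<in> J ` {..<r} \<or> t2 \<in> J ` {..<r})"
      have "det_sq (Suc (Suc r)) (mat_mul n (border_units r A t1 t2) Z) \<noteq> 0"
      proof (rule det_border_units_mul_ne_0[OF A(1) _ less.prems])
        show "positive_mat n (Suc (Suc r)) Z"
          using Z by simp
        show "t1 \<notin> J ` {..<r}" "t2 \<notin> J ` {..<r}"
          using avoid by auto
        show "w \<in> J' ` {..<r}" if "t1 < w" "w < t2" "J' \<in> sel r n" "max_minor r A J' \<noteq> 0"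
          "t1 \<notin> J' ` {..<r}" for w J'
          using less.hyps[of w J'] that less.prems(2) by auto
      qed
      then show False
        using singular by simp
    qed
  qed
  obtain J0 where J0: "J0 \<in> sel r n" "max_minor r A J0 \<noteq> 0"
    using A(2) unfolding full_row_rank_def by blast
  obtain t1 t2 where "t1 < t2" "t2 < n" "t1 \<notin> J0 ` {..<r}" "t2 \<notin> J0 ` {..<r}"
    using sel_avoids_two[OF J0(1) n] by blast
  then show False
    using meets[OF _ _ J0] by blast
qed

lemma full_row_rank_mat_mul_positive:
  assumes "r + 2 \<le> n" "minors_nonneg r n A" "full_row_rank r n A" "positive_mat n (r + 2) Z"
  shows "full_row_rank r (r + 2) (mat_mul n A Z)"
  using rows_independent_mat_mul_positive[OF assms] by (rule full_row_rank_if_rows_independent)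

lemma rowspan_mat_mul: "rowspan r (mat_mul n B Z) = img n Z (rowspan r B)"
proof -
  have comb: "(\<lambda>j. \<Sum>l<n. (\<Sum>i<r. a i * B i l) * Z l j) = (\<lambda>j. \<Sum>i<r. a i * mat_mul n B Z i j)"
    for a
  proof
    fix j
    have "(\<Sum>l<n. (\<Sum>i<r. a i * B i l) * Z l j) = (\<Sum>l<n. \<Sum>i<r. a i * (B i l * Z l j))"
      by (simp add: sum_distrib_right mult.assoc)
    also have "\<dots> = (\<Sum>i<r. a i * mat_mul n B Z i j)"
      unfolding mat_mul_def by (subst sum.swap) (simp add: sum_distrib_left)
    finally show "(\<Sum>l<n. (\<Sum>i<r. a i * B i l) * Z l j) = (\<Sum>i<r. a i * mat_mul n B Z i j)" .
  qed
  have "img n Z (rowspan r B) = {v. \<exists>a. v = (\<lambda>j. \<Sum>l<n. (\<Sum>i<r. a i * B i l) * Z l j)}"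
    unfolding img_def rowspan_def by auto
  then show ?thesis
    unfolding comb rowspan_def by simp
qed

lemma flag_of_mat_mul: "flag_of k (mat_mul n A Z) = amp_map n Z (flag_of k A)"
proof -
  have "lowerC (mat_mul n A Z) = mat_mul n (lowerC A) Z"
    by (simp add: lowerC_def mat_mul_def)
  then show ?thesis
    unfolding flag_of_def amp_map_def by (simp add: rowspan_mat_mul)
qed

lemma row_in_rowspan:
  assumes "i < r"
  shows "(\<lambda>j. A i j) \<in> rowspan r A"
proof -
  have "(\<Sum>l<r. (if l = i then 1 else 0) * A l j) = (\<Sum>l<r. if l = i then A l j else 0)" for j
    by (rule sum.cong) auto
  then have "A i j = (\<Sum>l<r. (if l = i then 1 else 0) * A l j)" for j
    using assms by simp
  then show ?thesis
    unfolding rowspan_def by (intro CollectI exI[of _ "\<lambda>l. if l = i then 1 else 0"] ext)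
qed

lemma max_minor_ne_0_rowspan_mono:
  assumes "rowspan r A \<subseteq> rowspan r A'" "max_minor r A t \<noteq> 0"
  shows "max_minor r A' t \<noteq> 0"
proof -
  have "\<forall>i<r. \<exists>a. (\<lambda>j. A i j) = (\<lambda>j. \<Sum>l<r. a l * A' l j)"
    using row_in_rowspan[of _ r A] assms(1) unfolding rowspan_def by blast
  then obtain h where h: "\<And>i j. i < r \<Longrightarrow> A i j = (\<Sum>l<r. h i l * A' l j)"
    by (metis (full_types))
  have "max_minor r A t = det_sq r (mat_mul r h (\<lambda>i j. A' i (t j)))"
    unfolding max_minor_def by (rule det_sq_cong) (simp add: h mat_mul_def)
  also have "\<dots> = det_sq r h * max_minor r A' t"
    unfolding det_sq_mat_mul max_minor_def ..
  finally show ?thesis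
    using assms(2) by auto
qed

lemma full_row_rank_rowspan_cong:
  assumes "rowspan r A = rowspan r A'"
  shows "full_row_rank r c A \<longleftrightarrow> full_row_rank r c A'"
  using max_minor_ne_0_rowspan_mono assms unfolding full_row_rank_def by (metis order_refl)

section \<open>Openness of full rank\<close>

definition mat_nhds :: "nat \<Rightarrow> nat \<Rightarrow> rmat \<Rightarrow> rmat filter" where
  "mat_nhds r c A = (INF e\<in>{0<..}. principal {A'. \<forall>i<r. \<forall>j<c. \<bar>A' i j - A i j\<bar> < e})"

lemma tendsto_mat_nhds_entry:
  assumes "i < r" "j < c"
  shows "((\<lambda>A'. A' i j) \<longlongrightarrow> A i j) (mat_nhds r c A)"
proof (rule tendstoI)
  fix e :: real assume "0 < e"
  then show "\<forall>\<^sub>F A' in mat_nhds r c A. dist (A' i j) (A i j) < e"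
    unfolding mat_nhds_def
    by (intro eventually_INF1[of e]) (use assms in \<open>auto simp: eventually_principal dist_real_def\<close>)
qed

lemma eventually_mat_nhdsD:
  assumes "eventually P (mat_nhds r c A)"
  shows "\<exists>e>0. \<forall>A'. (\<forall>i<r. \<forall>j<c. \<bar>A' i j - A i j\<bar> < e) \<longrightarrow> P A'"
proof -
  let ?F = "\<lambda>e. principal {A'. \<forall>i<r. \<forall>j<c. \<bar>A' i j - A i j\<bar> < e}"
  have "\<exists>e\<in>{0<..}. eventually P (?F e)"
  proof (rule iffD1[OF eventually_INF_base])
    show "\<exists>e\<in>{0<..}. ?F e \<le> inf (?F a) (?F b)" if "a \<in> {0<..}" "b \<in> {0<..}" for a b :: real
      using that by (intro bexI[of _ "min a b"]) (auto simp: inf_principal)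
  qed (use assms in \<open>auto simp: mat_nhds_def\<close>)
  then show ?thesis
    by (auto simp: eventually_principal)
qed

lemma mat_openI:
  assumes "\<And>A. A \<in> S \<Longrightarrow> is_mat r c A \<and> eventually (\<lambda>A'. is_mat r c A' \<longrightarrow> A' \<in> S) (mat_nhds r c A)"
  shows "mat_open r c S"
  unfolding mat_open_def
proof
  fix A assume "A \<in> S"
  then have "is_mat r c A" "eventually (\<lambda>A'. is_mat r c A' \<longrightarrow> A' \<in> S) (mat_nhds r c A)"
    using assms by auto
  then show "is_mat r c A \<and> (\<exists>e>0. \<forall>A'. is_mat r c A' \<and> (\<forall>i<r. \<forall>j<c. \<bar>A' i j - A i j\<bar> < e) \<longrightarrow> A' \<in> S)"
    using eventually_mat_nhdsD by blast
qed

lemma tendsto_det_sq: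
  assumes "\<And>i j. i < m \<Longrightarrow> j < m \<Longrightarrow> ((\<lambda>x. f x i j) \<longlongrightarrow> g i j) F"
  shows "((\<lambda>x. det_sq m (f x)) \<longlongrightarrow> det_sq m g) F"
  unfolding det_sq_def
proof (intro tendsto_sum tendsto_mult tendsto_const tendsto_prod)
  fix p i assume "p \<in> {p. p permutes {..<m}}" "i \<in> {..<m}"
  then show "((\<lambda>x. f x i (p i)) \<longlongrightarrow> g i (p i)) F"
    using assms permutes_in_image by fastforce
qed

lemma eventually_full_row_rank:
  assumes "full_row_rank r c (f x)"
    and "\<And>i j. i < r \<Longrightarrow> j < c \<Longrightarrow> ((\<lambda>y. f y i j) \<longlongrightarrow> f x i j) F"
  shows "eventually (\<lambda>y. full_row_rank r c (f y)) F"
proof -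
  obtain s where s: "s \<in> sel r c" "max_minor r (f x) s \<noteq> 0"
    using assms(1) unfolding full_row_rank_def by blast
  have "((\<lambda>y. max_minor r (f y) s) \<longlongrightarrow> max_minor r (f x) s) F"
    unfolding max_minor_def using s(1) by (intro tendsto_det_sq assms(2)) (auto simp: sel_def)
  then have "eventually (\<lambda>y. max_minor r (f y) s \<noteq> 0) F"
    using s(2) by (rule tendsto_imp_eventually_ne)
  then show ?thesis
    unfolding full_row_rank_def using s(1) by (auto elim: eventually_mono)
qed

section \<open>The amplituhedron map near the nonnegative part\<close>

definition amp_reps :: "nat \<Rightarrow> nat \<Rightarrow> nat \<Rightarrow> rmat \<Rightarrow> rmat set" where
  "amp_reps k n m Z = {A. is_rep k n A \<and> full_row_rank (k + 2) m (mat_mul n A Z)}"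

lemma mat_open_amp_reps: "mat_open (k + 2) n (amp_reps k n m Z)"
proof (rule mat_openI)
  fix A assume A: "A \<in> amp_reps k n m Z"
  have "eventually (\<lambda>A'. full_row_rank (k + 2) n A') (mat_nhds (k + 2) n A)"
    using A unfolding amp_reps_def is_rep_def
    by (intro eventually_full_row_rank[where f = "\<lambda>A. A"]) (auto intro: tendsto_mat_nhds_entry)
  moreover have "eventually (\<lambda>A'. full_row_rank (k + 2) m (mat_mul n A' Z)) (mat_nhds (k + 2) n A)"
    using A unfolding amp_reps_def mat_mul_def
    by (intro eventually_full_row_rank[where f = "\<lambda>A. mat_mul n A Z", unfolded mat_mul_def]
          tendsto_sum tendsto_mult tendsto_const) (auto intro: tendsto_mat_nhds_entry)
  ultimately show "is_mat (k + 2) n A \<and>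
      eventually (\<lambda>A'. is_mat (k + 2) n A' \<longrightarrow> A' \<in> amp_reps k n m Z) (mat_nhds (k + 2) n A)"
    using A unfolding amp_reps_def is_rep_def by (auto elim: eventually_elim2)
qed

lemma flag_of_in_image_amp_reps_iff:
  assumes "is_rep k n A"
  shows "flag_of k A \<in> flag_of k ` amp_reps k n m Z \<longleftrightarrow> A \<in> amp_reps k n m Z"
proof
  assume "flag_of k A \<in> flag_of k ` amp_reps k n m Z"
  then obtain A0 where A0: "A0 \<in> amp_reps k n m Z" "flag_of k A = flag_of k A0"
    by auto
  then have "rowspan (k + 2) (mat_mul n A Z) = rowspan (k + 2) (mat_mul n A0 Z)"
    unfolding flag_of_def rowspan_mat_mul by simp
  then show "A \<in> amp_reps k n m Z"
    using assms A0(1) full_row_rank_rowspan_cong unfolding amp_reps_def by blast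
qed auto

lemma Gr_nonneg_subset_amp_reps:
  assumes "k + 4 \<le> n" "positive_mat n (k + 4) Z"
  shows "Gr_nonneg k n \<subseteq> flag_of k ` amp_reps k n (k + 4) Z"
proof
  fix x assume "x \<in> Gr_nonneg k n"
  then obtain A where A: "x = flag_of k A" "is_rep k n A" "minors_nonneg (k + 2) n A"
    unfolding Gr_nonneg_def by auto
  have "full_row_rank (k + 2) (k + 4) (mat_mul n A Z)"
    using full_row_rank_mat_mul_positive[of "k + 2" n A Z] A(2,3) assms
    unfolding is_rep_def by (simp add: numeral_eq_Suc)
  then have "A \<in> amp_reps k n (k + 4) Z"
    using A(2) unfolding amp_reps_def by simp
  then show "x \<in> flag_of k ` amp_reps k n (k + 4) Z"
    using A(1) by blast
qed

lemma is_rep_mat_mul: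
  assumes "A \<in> amp_reps k n m Z" "is_mat n m Z"
  shows "is_rep k m (mat_mul n A Z)"
  using assms unfolding amp_reps_def is_rep_def is_mat_def mat_mul_def by auto

lemma positive_mat_det_sq_pos:
  assumes "positive_mat n m Z" "m \<le> n"
  shows "det_sq m Z > 0"
proof -
  have "(\<lambda>i. i) \<in> sel m n"
    using assms(2) unfolding sel_def by auto
  then show ?thesis
    using assms(1) unfolding positive_mat_def by fastforce
qed

lemma submersive_at_if_det_sq_ne_0:
  assumes Z: "is_mat n m Z" "m \<le> n" "det_sq m Z \<noteq> 0"
  shows "submersive_at k n m Z A"
  unfolding submersive_at_def
proof (intro allI impI)
  fix Y assume Y: "is_mat (k + 2) m Y"
  obtain W where W: "\<And>i j. i < m \<Longrightarrow> j < m \<Longrightarrow> (\<Sum>l<m. W i l * Z l j) = (if i = j then 1 else 0)"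
    using det_sq_left_inverse[OF Z(3)] by blast
  define X where "X i l = (if l < m then \<Sum>p<m. Y i p * W p l else 0)" for i l
  have "is_mat (k + 2) n X"
    using Y Z(2) unfolding is_mat_def X_def by auto
  moreover have "parabolic_lie k (\<lambda>_ _. 0)"
    unfolding parabolic_lie_def is_mat_def by simp
  moreover have "Y i j = mat_mul n X Z i j" for i j
  proof (cases "j < m")
    case True
    have "mat_mul n X Z i j = (\<Sum>l<m. (\<Sum>p<m. Y i p * W p l) * Z l j)"
      unfolding mat_mul_def X_def using Z(2)
      by (intro sum.mono_neutral_cong_right) auto
    also have "\<dots> = (\<Sum>l<m. \<Sum>p<m. Y i p * (W p l * Z l j))"
      by (simp add: sum_distrib_right mult.assoc)
    also have "\<dots> = (\<Sum>p<m. Y i p * (\<Sum>l<m. W p l * Z l j))"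
      by (subst sum.swap) (simp add: sum_distrib_left)
    also have "\<dots> = (\<Sum>p<m. if p = j then Y i p else 0)"
      using True W by (intro sum.cong) auto
    also have "\<dots> = Y i j"
      using True by simp
    finally show ?thesis ..
  next
    case False
    then show ?thesis
      using Y Z(1) unfolding is_mat_def mat_mul_def by simp
  qed
  ultimately show "\<exists>X G. is_mat (k + 2) n X \<and> parabolic_lie k G \<and>
      Y = (\<lambda>i j. mat_mul n X Z i j + mat_mul (k + 2) G (mat_mul n A Z) i j)"
    by (intro exI[of _ X] exI[of _ "\<lambda>_ _. 0"]) (simp add: mat_mul_def fun_eq_iff)
qed

theorem mainTheorem3:
  fixes k n :: nat and Z :: rmat
  assumes "n \<ge> k + 4"
    and "positive_mat n (k + 4) Z"
  shows "\<exists>B. Gr_open k n B \<and> Gr_nonneg k n \<subseteq> B \<and>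
           (\<forall>x\<in>B. amp_map n Z x \<in> Gr k (k + 4)) \<and>
           (\<forall>A. is_rep k n A \<and> flag_of k A \<in> B \<longrightarrow>
               is_rep k (k + 4) (mat_mul n A Z) \<and>
               flag_of k (mat_mul n A Z) = amp_map n Z (flag_of k A) \<and>
               submersive_at k n (k + 4) Z A)"
proof -
  define B where "B = flag_of k ` amp_reps k n (k + 4) Z"
  have Z: "is_mat n (k + 4) Z" "det_sq (k + 4) Z \<noteq> 0"
    using assms(2) positive_mat_det_sq_pos[OF assms(2,1)] unfolding positive_mat_def by auto
  have "is_rep k n A" if "A \<in> amp_reps k n (k + 4) Z" for A
    using that unfolding amp_reps_def by simp
  then have reps: "{A. is_rep k n A \<and> flag_of k A \<in> B} = amp_reps k n (k + 4) Z"
    unfolding B_def using flag_of_in_image_amp_reps_iff by blast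
  have "Gr_open k n B"
    unfolding Gr_open_def reps using mat_open_amp_reps by (auto simp: B_def Gr_def amp_reps_def)
  moreover have "Gr_nonneg k n \<subseteq> B"
    unfolding B_def using assms by (rule Gr_nonneg_subset_amp_reps)
  moreover have "amp_map n Z x \<in> Gr k (k + 4)" if "x \<in> B" for x
    using that is_rep_mat_mul[OF _ Z(1)] unfolding B_def Gr_def by (auto simp: flag_of_mat_mul[symmetric])
  moreover have "A \<in> amp_reps k n (k + 4) Z" if "is_rep k n A" "flag_of k A \<in> B" for A
    using that reps by blast
  ultimately show ?thesis
    using is_rep_mat_mul[OF _ Z(1)] flag_of_mat_mul submersive_at_if_det_sq_ne_0[OF Z(1) assms(1) Z(2)]
    by blast
qed

end
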